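(* Let $A$ be a finite set, $C \subseteq O_A$ a total clone containing the constant function $c_a$ for some $a\in A$, and $X \in \mathcal{I}_{\mathrm{str}}(C)$. Then for every partial function $f$ on $A$: $f \in X$ if and only if $f_a \in X$.
   Context: A partial function of arity $n$ on $A$ is a map $f:\operatorname{dom} f\to A$ with $\operatorname{dom} f\subseteq A^n$; total if $\operatorname{dom} f=A^n$. $P_A$, $O_A$ denote the sets of partial, resp. total, functions. Composition $F=f(g_1,\dots,g_n)$ is given by $F(\mathbf{x})=f(g_1(\mathbf{x}),\dots,g_n(\mathbf{x}))$ on $\operatorname{dom} F=\{\mathbf{x}\in\bigcap_i\operatorname{dom} g_i : (g_1(\mathbf{x}),\dots,g_n(\mathbf{x}))\in\operatorname{dom} f\}$. A partial clone is a composition-closed subset of $P_A$ containing all projections; a total clone is one contained in $O_A$; a partial clone is strong if it contains all restrictions of its members. $\mathcal{I}_{\mathrm{str}}(C)$ is the set of strong partial clones $X$ with $X\cap O_A=C$. For an $n$-ary partial $f$ and $a\in A$, $f_a$ is the $(n+1)$-ary partial function with $\operatorname{dom} f_a=\{(a,\mathbf{x}):\mathbf{x}\in\operatorname{dom} f\}$ and $f_a(a,\mathbf{x})=f(\mathbf{x})$. *)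

theory Defs
  imports Main
begin

text \<open>A partial function on A of arity n is represented as a pair (n, g) where
  g :: 'a list => 'a option; its domain is the set of lists where g is defined,
  which must consist of lists of length n over A; values lie in A.\<close>

type_synonym 'a pfun = "nat \<times> ('a list \<Rightarrow> 'a option)"

definition arity :: "'a pfun \<Rightarrow> nat" where "arity f = fst f"
definition pdom :: "'a pfun \<Rightarrow> 'a list set" where "pdom f = {xs. snd f xs \<noteq> None}"

definition tuples :: "'a set \<Rightarrow> nat \<Rightarrow> 'a list set" where
  "tuples A n = {xs. length xs = n \<and> set xs \<subseteq> A}"

definition is_pfun :: "'a set \<Rightarrow> 'a pfun \<Rightarrow> bool" where
  "is_pfun A f \<longleftrightarrow> arity f \<ge> 1 \<and> pdom f \<subseteq> tuples A (arity f)
      \<and> (\<forall>xs y. snd f xs = Some y \<longrightarrow> y \<in> A)"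

definition P_A :: "'a set \<Rightarrow> 'a pfun set" where "P_A A = {f. is_pfun A f}"
definition O_A :: "'a set \<Rightarrow> 'a pfun set" where
  "O_A A = {f. is_pfun A f \<and> pdom f = tuples A (arity f)}"

definition pcomp :: "'a set \<Rightarrow> 'a pfun \<Rightarrow> nat \<Rightarrow> 'a pfun list \<Rightarrow> 'a pfun" where
  "pcomp A f m gs = (m, \<lambda>xs. if xs \<in> tuples A m \<and> (\<forall>g\<in>set gs. snd g xs \<noteq> None)
       then snd f (map (\<lambda>g. the (snd g xs)) gs) else None)"

definition proj :: "'a set \<Rightarrow> nat \<Rightarrow> nat \<Rightarrow> 'a pfun" where
  "proj A m i = (m, \<lambda>xs. if xs \<in> tuples A m then Some (xs ! i) else None)"

definition partial_clone :: "'a set \<Rightarrow> 'a pfun set \<Rightarrow> bool" where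
  "partial_clone A X \<longleftrightarrow> X \<subseteq> P_A A
     \<and> (\<forall>m i. 1 \<le> m \<and> i < m \<longrightarrow> proj A m i \<in> X)
     \<and> (\<forall>f\<in>X. \<forall>m gs. 1 \<le> m \<and> length gs = arity f \<and> (\<forall>g\<in>set gs. g \<in> X \<and> arity g = m)
            \<longrightarrow> pcomp A f m gs \<in> X)"

definition total_clone :: "'a set \<Rightarrow> 'a pfun set \<Rightarrow> bool" where
  "total_clone A C \<longleftrightarrow> partial_clone A C \<and> C \<subseteq> O_A A"

definition restriction_of :: "'a pfun \<Rightarrow> 'a pfun \<Rightarrow> bool" where
  "restriction_of g f \<longleftrightarrow> arity g = arity f \<and> (\<forall>xs y. snd g xs = Some y \<longrightarrow> snd f xs = Some y)"

definition strong_partial_clone :: "'a set \<Rightarrow> 'a pfun set \<Rightarrow> bool" where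
  "strong_partial_clone A X \<longleftrightarrow> partial_clone A X
     \<and> (\<forall>f\<in>X. \<forall>g. restriction_of g f \<longrightarrow> g \<in> X)"

definition I_str :: "'a set \<Rightarrow> 'a pfun set \<Rightarrow> 'a pfun set set" where
  "I_str A C = {X. strong_partial_clone A X \<and> X \<inter> O_A A = C}"

definition const_fun :: "'a set \<Rightarrow> 'a \<Rightarrow> 'a pfun" where
  "const_fun A a = (1, \<lambda>xs. if xs \<in> tuples A 1 then Some a else None)"

definition fix_first :: "'a pfun \<Rightarrow> 'a \<Rightarrow> 'a pfun" where
  "fix_first f a = (Suc (arity f), \<lambda>ys. case ys of [] \<Rightarrow> None
       | b # xs \<Rightarrow> if b = a then snd f xs else None)"

end

theory Submission
  imports Defs
begin

text \<open>Adding a dummy first variable to \<open>f\<close> and restricting its domain to first coordinate \<open>a\<close>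
  yields \<open>f\<^sub>a\<close>, so \<open>f\<^sub>a\<close> lies in every strong partial clone containing \<open>f\<close>. Conversely,
  substituting the constant \<open>a\<close> for the first variable of \<open>f\<^sub>a\<close> gives back \<open>f\<close>; the
  constant is available in arity \<open>n\<close> as \<open>c\<^sub>a\<close> composed with a projection, and \<open>c\<^sub>a \<in> C \<subseteq> X\<close>.\<close>

lemma partial_clone_proj:
  "partial_clone A X \<Longrightarrow> 1 \<le> m \<Longrightarrow> i < m \<Longrightarrow> proj A m i \<in> X"
  by (simp add: partial_clone_def)

lemma partial_clone_pcomp:
  assumes "partial_clone A X" "f \<in> X" "1 \<le> m" "length gs = arity f"
    and "\<And>g. g \<in> set gs \<Longrightarrow> g \<in> X \<and> arity g = m"
  shows "pcomp A f m gs \<in> X"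
  using assms unfolding partial_clone_def by blast

lemma strong_partial_clone_restriction:
  "strong_partial_clone A X \<Longrightarrow> f \<in> X \<Longrightarrow> restriction_of g f \<Longrightarrow> g \<in> X"
  unfolding strong_partial_clone_def by blast

lemma arity_proj [simp]: "arity (proj A m i) = m"
  by (simp add: proj_def arity_def)

lemma arity_pcomp [simp]: "arity (pcomp A f m gs) = m"
  by (simp add: pcomp_def arity_def)

lemma arity_const_fun [simp]: "arity (const_fun A a) = 1"
  by (simp add: const_fun_def arity_def)

lemma arity_fix_first [simp]: "arity (fix_first f a) = Suc (arity f)"
  by (simp add: fix_first_def arity_def)

lemma is_pfun_None_outside:
  "is_pfun A f \<Longrightarrow> xs \<notin> tuples A (arity f) \<Longrightarrow> snd f xs = None"
  by (auto simp: is_pfun_def pdom_def)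

definition dummy_first :: "'a set \<Rightarrow> 'a pfun \<Rightarrow> 'a pfun" where
  "dummy_first A f =
     pcomp A f (Suc (arity f)) (map (\<lambda>i. proj A (Suc (arity f)) (Suc i)) [0..<arity f])"

lemma dummy_first_mem:
  assumes "partial_clone A X" "f \<in> X"
  shows "dummy_first A f \<in> X"
  unfolding dummy_first_def
  by (rule partial_clone_pcomp[OF assms]) (auto simp: partial_clone_proj[OF assms(1)])

lemma fix_first_restriction_of_dummy_first:
  assumes f: "is_pfun A f" and a: "a \<in> A"
  shows "restriction_of (fix_first f a) (dummy_first A f)"
  unfolding restriction_of_def
proof (intro conjI allI impI)
  show "arity (fix_first f a) = arity (dummy_first A f)"
    by (simp add: dummy_first_def)
next
  fix ys y
  assume "snd (fix_first f a) ys = Some y"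
  then obtain xs where ys: "ys = a # xs" and fxs: "snd f xs = Some y"
    by (auto simp: fix_first_def split: list.splits if_splits)
  have "xs \<in> tuples A (arity f)"
    using is_pfun_None_outside[OF f] fxs by fastforce
  then have len: "length xs = arity f" and ys_tuple: "ys \<in> tuples A (Suc (arity f))"
    using a by (auto simp: tuples_def ys)
  have "map (\<lambda>i. the (snd (proj A (Suc (arity f)) (Suc i)) ys)) [0..<arity f] = xs"
    using ys_tuple by (simp add: proj_def ys map_nth flip: len)
  then show "snd (dummy_first A f) ys = Some y"
    using ys_tuple fxs by (simp add: dummy_first_def pcomp_def proj_def o_def)
qed

definition const_on :: "'a set \<Rightarrow> nat \<Rightarrow> 'a \<Rightarrow> 'a pfun" where
  "const_on A n a = pcomp A (const_fun A a) n [proj A n 0]"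

lemma const_on_mem:
  assumes "partial_clone A X" "const_fun A a \<in> X" "1 \<le> n"
  shows "const_on A n a \<in> X"
  unfolding const_on_def
  using partial_clone_proj[OF assms(1,3), of 0] assms(3)
  by (intro partial_clone_pcomp[OF assms]) auto

lemma const_on_apply:
  assumes "xs \<in> tuples A n" "1 \<le> n"
  shows "snd (const_on A n a) xs = Some a"
proof -
  have "[xs ! 0] \<in> tuples A 1"
    using assms by (cases xs) (auto simp: tuples_def)
  then show ?thesis
    using assms(1) by (simp add: const_on_def pcomp_def proj_def const_fun_def)
qed

lemma pcomp_fix_first_const_on:
  assumes f: "is_pfun A f"
  shows "pcomp A (fix_first f a) (arity f)
           (const_on A (arity f) a # map (proj A (arity f)) [0..<arity f]) = f"
    (is "pcomp A _ ?n ?gs = f")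
proof -
  have n: "1 \<le> ?n"
    using f by (simp add: is_pfun_def)
  have "snd (pcomp A (fix_first f a) ?n ?gs) xs = snd f xs" for xs
  proof (cases "xs \<in> tuples A ?n")
    case True
    then have len: "length xs = ?n"
      by (simp add: tuples_def)
    have "map (\<lambda>g. the (snd g xs)) ?gs = a # xs"
      using True const_on_apply[OF True n] by (simp add: proj_def o_def map_nth flip: len)
    then show ?thesis
      using True const_on_apply[OF True n] by (simp add: pcomp_def proj_def fix_first_def)
  next
    case False
    then show ?thesis
      using is_pfun_None_outside[OF f] by (simp add: pcomp_def)
  qed
  then show ?thesis
    by (simp add: pcomp_def arity_def prod_eq_iff fun_eq_iff)
qed

lemma fix_first_mem_imp_mem:
  assumes "partial_clone A X" "const_fun A a \<in> X" "is_pfun A f" "fix_first f a \<in> X"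
  shows "f \<in> X"
proof -
  have n: "1 \<le> arity f"
    using assms(3) by (simp add: is_pfun_def)
  have "pcomp A (fix_first f a) (arity f)
          (const_on A (arity f) a # map (proj A (arity f)) [0..<arity f]) \<in> X"
    using const_on_mem[OF assms(1,2) n] partial_clone_proj[OF assms(1) n]
    by (intro partial_clone_pcomp[OF assms(1,4) n]) (auto simp: const_on_def)
  then show ?thesis
    by (simp only: pcomp_fix_first_const_on[OF assms(3)])
qed

theorem mainTheorem14:
  fixes A :: "'a set" and C X :: "'a pfun set" and a :: 'a and f :: "'a pfun"
  assumes "finite A"
    and "total_clone A C"
    and "a \<in> A"
    and "const_fun A a \<in> C"
    and "X \<in> I_str A C"
    and "f \<in> P_A A"
  shows "f \<in> X \<longleftrightarrow> fix_first f a \<in> X"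
proof -
  have strong: "strong_partial_clone A X" and total_part: "X \<inter> O_A A = C"
    using assms(5) by (auto simp: I_str_def)
  then have clone: "partial_clone A X"
    by (simp add: strong_partial_clone_def)
  have f: "is_pfun A f"
    using assms(6) by (simp add: P_A_def)
  have const: "const_fun A a \<in> X"
    using assms(4) total_part by blast
  show ?thesis
  proof
    assume "f \<in> X"
    then show "fix_first f a \<in> X"
      by (meson strong_partial_clone_restriction[OF strong] dummy_first_mem[OF clone]
          fix_first_restriction_of_dummy_first[OF f assms(3)])
  qed (rule fix_first_mem_imp_mem[OF clone const f])
qed

end
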